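(* If $A\in S_n(\mathbb{F}_2)$ is an alternate matrix of rank $r>0$, then there exist linearly independent $\mathbf{x}_1,\ldots,\mathbf{x}_r\in\mathbb{F}_2^n$ with $A=\mathbf{x}_1\mathbf{x}_1^{\top}+\cdots+\mathbf{x}_r\mathbf{x}_r^{\top}+(\mathbf{x}_1+\cdots+\mathbf{x}_r)(\mathbf{x}_1+\cdots+\mathbf{x}_r)^{\top}$. Moreover, if $r$ is even and $A=\mathbf{y}_1\circ\mathbf{y}_2+\cdots+\mathbf{y}_{r-1}\circ\mathbf{y}_r$ for linearly independent $\mathbf{y}_1,\ldots,\mathbf{y}_r$, then the vectors $\mathbf{x}_1=\mathbf{y}_1$, $\mathbf{x}_2=\mathbf{y}_2$, and for $2\le k\le r/2$, $\mathbf{x}_{2k-1}=\mathbf{y}_1+\cdots+\mathbf{y}_{2k-2}+\mathbf{y}_{2k-1}$, $\mathbf{x}_{2k}=\mathbf{y}_1+\cdots+\mathbf{y}_{2k-2}+\mathbf{y}_{2k}$, have this property.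
   Context: $S_n(\mathbb{F}_2)$ is the set of symmetric $n\times n$ matrices over the binary field; such a matrix is alternate if its diagonal is zero. For $\mathbf{x},\mathbf{y}\in\mathbb{F}_2^n$, $\mathbf{x}\circ\mathbf{y}=\mathbf{x}\mathbf{y}^{\top}+\mathbf{y}\mathbf{x}^{\top}$. *)

theory Defs
  imports "HOL-Analysis.Analysis" "HOL-Library.Z2"
begin

text \<open>The binary field F_2 is the type bit (HOL-Library.Z2, a field).
  Vectors in F_2^n are bit ^ 'n, n x n matrices are bit ^ 'n ^ 'n.\<close>

definition outer :: "bit ^ 'n \<Rightarrow> bit ^ 'n \<Rightarrow> bit ^ 'n ^ 'n" where
  "outer x y = (\<chi> i j. x $ i * y $ j)"

definition circ :: "bit ^ 'n \<Rightarrow> bit ^ 'n \<Rightarrow> bit ^ 'n ^ 'n" where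
  "circ x y = outer x y + outer y x"

definition alternate :: "bit ^ 'n ^ 'n \<Rightarrow> bool" where
  "alternate A \<longleftrightarrow> transpose A = A \<and> (\<forall>i. A $ i $ i = 0)"

definition lin_indep_fam :: "(nat \<Rightarrow> bit ^ 'n) \<Rightarrow> nat \<Rightarrow> bool" where
  "lin_indep_fam x r \<longleftrightarrow> inj_on x {1..r} \<and> vec.independent (x ` {1..r})"

end

theory Submission
  imports Defs
begin

text \<open>Clearing two rows at a time (symplectic Gram-Schmidt) writes an alternate A as
  y_1 \<circ> y_2 + ... + y_{2m-1} \<circ> y_{2m} with independent y's spanning the row space, so r = 2m.
  Given such a decomposition, put T = y_1 + ... + y_{2k}, a = y_{2k+1}, b = y_{2k+2}. In
  characteristic 2 we have (T+a)(T+a)^T + (T+b)(T+b)^T + (T+a+b)(T+a+b)^T = T T^T + a \<circ> b, and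
  x_1 + ... + x_{2k} = T, so the identity follows by induction on the number of pairs. The
  x's arise from the y's by a unitriangular change of basis, hence are independent.\<close>

\<comment> \<open>Keep bit arithmetic in ring form instead of the library's bitwise normal form.\<close>
declare add_bit_eq_xor [simp del] and mult_bit_eq_and [simp del]

lemma bit_add_self [simp]: "(c::bit) + c = 0"
  by (cases c) simp_all

lemma bit_vec_add_self [simp]: "(v::bit^'n) + v = 0"
  by (simp add: vec_eq_iff)

lemma bit_matrix_add_self [simp]: "(M::bit^'n^'m) + M = 0"
  by (simp add: vec_eq_iff)

lemma row_circ: "circ a b $ t = a $ t *s b + b $ t *s a"
  by (simp add: circ_def outer_def vec_eq_iff mult.commute)

lemma outer_shift_three:
  "outer (t + a) (t + a) + outer (t + b) (t + b) + outer (t + a + b) (t + a + b)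
     = outer t t + circ a b"
  by (simp add: outer_def circ_def vec_eq_iff algebra_simps)

lemma rows_eq_range: "rows A = range (\<lambda>t. A $ t)"
  by (auto simp: rows_def row_def)

lemma rows_span_base: "A $ t \<in> vec.span (rows A)"
  by (intro vec.span_base) (simp add: rows_eq_range)

lemma span_subset_coordinate_zero:
  assumes "\<forall>v\<in>S. v $ i = 0"
  shows "vec.span S \<subseteq> {w :: 'a::field ^ 'n. w $ i = 0}"
proof (rule vec.span_minimal)
  show "vec.subspace {w :: 'a ^ 'n. w $ i = 0}"
    by (simp add: vec.subspace_def)
qed (use assms in blast)

lemma alternate_sym: "alternate A \<Longrightarrow> A $ p $ q = A $ q $ p"
  unfolding alternate_def by (metis transpose_def vec_lambda_beta)

lemma alternate_diag: "alternate A \<Longrightarrow> A $ p $ p = 0"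
  by (simp add: alternate_def)

lemma alternate_add_circ: "alternate A \<Longrightarrow> alternate (A + circ a b)"
  unfolding alternate_def
  by (simp add: vec_eq_iff transpose_def circ_def outer_def mult.commute add.commute)

lemma span_rows_subset_coordinate_zero:
  assumes "alternate A" and "A $ i = 0"
  shows "vec.span (rows A) \<subseteq> {w. w $ i = 0}"
proof (rule span_subset_coordinate_zero)
  have "A $ t $ i = 0" for t
    using alternate_sym[OF assms(1), of t i] assms(2) by simp
  then show "\<forall>v\<in>rows A. v $ i = 0"
    by (simp add: rows_eq_range)
qed

lemma alternate_clear_pair:
  assumes alt: "alternate A" and ij: "A $ i $ j = 1" and A': "A' = A + circ (A $ i) (A $ j)"
  shows "alternate A'" and "A' $ i = 0" and "A' $ j = 0"
    and "{t. A' $ t \<noteq> 0} \<subset> {t. A $ t \<noteq> 0}" and "rows A' \<subseteq> vec.span (rows A)"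
proof -
  have row: "A' $ t = A $ t + A $ t $ i *s A $ j + A $ t $ j *s A $ i" for t
    using alternate_sym[OF alt] by (simp add: A' row_circ add.assoc)
  show "alternate A'"
    unfolding A' using alt by (rule alternate_add_circ)
  show "A' $ i = 0" and "A' $ j = 0"
    using row[of i] row[of j] ij alternate_sym[OF alt, of j i] by (simp_all add: alternate_diag[OF alt])
  moreover have "A' $ t = 0" if "A $ t = 0" for t
    using row[of t] that by simp
  moreover have "A $ i \<noteq> 0"
    using ij by (auto simp: vec_eq_iff)
  ultimately show "{t. A' $ t \<noteq> 0} \<subset> {t. A $ t \<noteq> 0}"
    by auto
  show "rows A' \<subseteq> vec.span (rows A)"
  proof
    fix w assume "w \<in> rows A'"
    then obtain t where "w = A $ t + A $ t $ i *s A $ j + A $ t $ j *s A $ i"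
      by (auto simp: rows_eq_range row)
    then show "w \<in> vec.span (rows A)"
      by (simp add: vec.span_add vec.span_scale rows_span_base)
  qed
qed

lemma image_fun_upd_atLeastAtMost_Suc: "y(Suc n := a) ` {1..Suc n} = insert a (y ` {1..n})"
proof -
  have range: "{1..Suc n} = insert (Suc n) {1..n}"
    by auto
  have "y(Suc n := a) ` {1..n} = y ` {1..n}"
    by (intro image_cong) auto
  then show ?thesis
    by (simp only: range image_insert fun_upd_same)
qed

lemma lin_indep_fam_extend:
  assumes y: "lin_indep_fam y n" and zero: "\<forall>v\<in>y ` {1..n}. v $ i = 0" and a: "a $ i \<noteq> 0"
  shows "lin_indep_fam (y(Suc n := a)) (Suc n)"
proof -
  have a_span: "a \<notin> vec.span (y ` {1..n})"
    using span_subset_coordinate_zero[OF zero] a by auto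
  then have a_notin: "a \<notin> y ` {1..n}"
    using vec.span_base by metis
  have range: "{1..Suc n} = insert (Suc n) {1..n}"
    by auto
  have "inj_on (y(Suc n := a)) {1..n}"
    using y unfolding lin_indep_fam_def by (subst inj_on_cong) auto
  then have "inj_on (y(Suc n := a)) {1..Suc n}"
    unfolding range inj_on_insert using a_notin by simp
  moreover have "vec.independent (y(Suc n := a) ` {1..Suc n})"
    using y vec.independent_insertI[OF a_span]
    unfolding image_fun_upd_atLeastAtMost_Suc lin_indep_fam_def by simp
  ultimately show ?thesis
    unfolding lin_indep_fam_def ..
qed

lemma lin_indep_fam_extend_pair:
  assumes y: "lin_indep_fam y n" and zero: "\<forall>v\<in>y ` {1..n}. v $ i = 0 \<and> v $ j = 0"
    and a: "a $ i = 0" "a $ j \<noteq> 0" and b: "b $ i \<noteq> 0"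
  shows "lin_indep_fam (y(Suc n := a, Suc (Suc n) := b)) (Suc (Suc n))"
proof (rule lin_indep_fam_extend[where i = i])
  show "lin_indep_fam (y(Suc n := a)) (Suc n)"
    using y zero a(2) by (intro lin_indep_fam_extend[where i = j]) auto
  show "\<forall>v\<in>y(Suc n := a) ` {1..Suc n}. v $ i = 0"
    using zero a(1) by (simp add: image_fun_upd_atLeastAtMost_Suc)
qed (rule b)

lemma circ_sum_fun_upd:
  "(\<Sum>k = 1..Suc m. circ ((y(Suc (2*m) := a, Suc (Suc (2*m)) := b)) (2*k - 1))
                         ((y(Suc (2*m) := a, Suc (Suc (2*m)) := b)) (2*k)))
     = (\<Sum>k = 1..m. circ (y (2*k - 1)) (y (2*k))) + circ a b"
proof -
  have "(\<Sum>k = 1..m. circ ((y(Suc (2*m) := a, Suc (Suc (2*m)) := b)) (2*k - 1))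
                       ((y(Suc (2*m) := a, Suc (Suc (2*m)) := b)) (2*k)))
          = (\<Sum>k = 1..m. circ (y (2*k - 1)) (y (2*k)))"
    by (intro sum.cong) auto
  then show ?thesis
    by simp
qed

lemma alternate_eq_circ_sum:
  fixes A :: "bit ^ 'n ^ 'n"
  assumes "alternate A"
  shows "\<exists>m y. lin_indep_fam y (2*m) \<and> A = (\<Sum>k = 1..m. circ (y (2*k - 1)) (y (2*k)))
           \<and> y ` {1..2*m} \<subseteq> vec.span (rows A)"
  using assms
proof (induction "card {t. A $ t \<noteq> 0}" arbitrary: A rule: less_induct)
  case less
  show ?case
  proof (cases "A = 0")
    case True
    then show ?thesis
      by (intro exI[of _ 0]) (simp add: lin_indep_fam_def vec.independent_empty)
  next
    case False
    then obtain i j where "A $ i $ j \<noteq> 0"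
      by (metis vec_eq_iff zero_index)
    then have ij: "A $ i $ j = 1"
      by simp
    define A' where "A' = A + circ (A $ i) (A $ j)"
    note clear = alternate_clear_pair[OF less.prems ij A'_def]
    have "card {t. A' $ t \<noteq> 0} < card {t. A $ t \<noteq> 0}"
      using clear(4) by (rule psubset_card_mono[rotated]) simp
    from less.hyps[OF this clear(1)] obtain m y where y: "lin_indep_fam y (2*m)"
      and A': "A' = (\<Sum>k = 1..m. circ (y (2*k - 1)) (y (2*k)))"
      and y_rows: "y ` {1..2*m} \<subseteq> vec.span (rows A')"
      by blast
    have y_span: "y ` {1..2*m} \<subseteq> vec.span (rows A)"
      using y_rows clear(5) vec.span_minimal[OF _ vec.subspace_span] by blast
    have zero: "\<forall>v \<in> y ` {1..2*m}. v $ i = 0 \<and> v $ j = 0"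
      using y_rows span_rows_subset_coordinate_zero[OF clear(1)] clear(2,3) by blast
    define z where "z = y(Suc (2*m) := A $ i, Suc (Suc (2*m)) := A $ j)"
    have image: "z ` {1..2*Suc m} = insert (A $ j) (insert (A $ i) (y ` {1..2*m}))"
      unfolding z_def mult_Suc_right add_2_eq_Suc by (simp only: image_fun_upd_atLeastAtMost_Suc)
    have "lin_indep_fam z (2*Suc m)"
      unfolding z_def mult_Suc_right add_2_eq_Suc
      using y zero ij alternate_diag[OF less.prems, of i] alternate_sym[OF less.prems, of i j]
      by (intro lin_indep_fam_extend_pair) simp_all
    moreover have "A = (\<Sum>k = 1..Suc m. circ (z (2*k - 1)) (z (2*k)))"
      unfolding z_def circ_sum_fun_upd A'[symmetric] A'_def by (simp add: add.assoc)
    moreover have "z ` {1..2*Suc m} \<subseteq> vec.span (rows A)"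
      unfolding image using y_span rows_span_base[of A i] rows_span_base[of A j] by simp
    ultimately show ?thesis
      by (intro exI[of _ "Suc m"] exI[of _ z] conjI)
  qed
qed

lemma rows_circ_sum_subset_span:
  fixes y :: "nat \<Rightarrow> bit ^ 'n"
  shows "rows (\<Sum>k = 1..m. circ (y (2*k - 1)) (y (2*k))) \<subseteq> vec.span (y ` {1..2*m})"
proof
  fix w assume "w \<in> rows (\<Sum>k = 1..m. circ (y (2*k - 1)) (y (2*k)))"
  then obtain t where "w = (\<Sum>k = 1..m. circ (y (2*k - 1)) (y (2*k))) $ t"
    by (auto simp: rows_eq_range)
  also have "\<dots> = (\<Sum>k = 1..m. y (2*k - 1) $ t *s y (2*k) + y (2*k) $ t *s y (2*k - 1))"
    by (simp add: row_circ)
  also have "\<dots> \<in> vec.span (y ` {1..2*m})"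
    by (intro vec.span_sum vec.span_add vec.span_scale vec.span_base) (auto intro!: imageI)
  finally show "w \<in> vec.span (y ` {1..2*m})" .
qed

lemma rank_eq_if_span_rows_eq:
  assumes "lin_indep_fam y r" and "vec.span (rows A) = vec.span (y ` {1..r})"
  shows "rank A = r"
proof -
  have "rank A = vec.dim (y ` {1..r})"
    unfolding row_rank_def_gen using assms(2) by (rule vec.span_eq_dim)
  also have "\<dots> = r"
    using assms(1) vec.dim_eq_card_independent card_image unfolding lin_indep_fam_def by fastforce
  finally show ?thesis .
qed

lemma sum_double_Suc:
  fixes f :: "nat \<Rightarrow> 'a::comm_monoid_add"
  shows "(\<Sum>i = 1..2*Suc m. f i) = (\<Sum>i = 1..2*m. f i) + f (2*m + 1) + f (2*m + 2)"
proof -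
  have "2*Suc m = Suc (Suc (2*m))" by simp
  then show ?thesis by (simp add: add.assoc)
qed

text \<open>For i \<in> {2k-1, 2k} this is y_1 + ... + y_{2k-2} + y_i, the vector x_i of the theorem.\<close>
definition pair_shift :: "(nat \<Rightarrow> bit ^ 'n) \<Rightarrow> nat \<Rightarrow> bit ^ 'n" where
  "pair_shift y i = (\<Sum>j = 1..2*((i - 1) div 2). y j) + y i"

lemma pair_shift_odd: "pair_shift y (2*m + 1) = (\<Sum>j = 1..2*m. y j) + y (2*m + 1)"
  by (simp add: pair_shift_def)

lemma pair_shift_even: "pair_shift y (2*m + 2) = (\<Sum>j = 1..2*m. y j) + y (2*m + 2)"
  by (simp add: pair_shift_def)

lemma sum_pair_shift: "(\<Sum>i = 1..2*m. pair_shift y i) = (\<Sum>i = 1..2*m. y i)"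
proof (induction m)
  case 0
  then show ?case by simp
next
  case (Suc m)
  let ?s = "\<Sum>i = 1..2*m. y i"
  have "(\<Sum>i = 1..2*Suc m. pair_shift y i) = ?s + (?s + y (2*m + 1)) + (?s + y (2*m + 2))"
    by (simp only: sum_double_Suc Suc pair_shift_odd pair_shift_even)
  also have "\<dots> = ?s + y (2*m + 1) + y (2*m + 2)"
    by (simp add: add_ac)
  finally show ?case by (simp only: sum_double_Suc)
qed

lemma outer_sum_pair_shift:
  "(\<Sum>i = 1..2*m. outer (pair_shift y i) (pair_shift y i))
     + outer (\<Sum>i = 1..2*m. pair_shift y i) (\<Sum>i = 1..2*m. pair_shift y i)
   = (\<Sum>k = 1..m. circ (y (2*k - 1)) (y (2*k)))"
proof (induction m)
  case 0
  then show ?case by (simp add: outer_def vec_eq_iff)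
next
  case (Suc m)
  let ?s = "\<Sum>i = 1..2*m. y i"
  let ?a = "y (2*m + 1)" and ?b = "y (2*m + 2)"
  have sum: "(\<Sum>i = 1..2*Suc m. pair_shift y i) = ?s + ?a + ?b"
    by (subst sum_pair_shift) (rule sum_double_Suc)
  have "(\<Sum>i = 1..2*Suc m. outer (pair_shift y i) (pair_shift y i))
          + outer (\<Sum>i = 1..2*Suc m. pair_shift y i) (\<Sum>i = 1..2*Suc m. pair_shift y i)
        = (\<Sum>i = 1..2*m. outer (pair_shift y i) (pair_shift y i))
          + (outer (?s + ?a) (?s + ?a) + outer (?s + ?b) (?s + ?b) + outer (?s + ?a + ?b) (?s + ?a + ?b))"
    unfolding sum by (simp only: sum_double_Suc pair_shift_odd pair_shift_even add.assoc)
  also have "\<dots> = (\<Sum>i = 1..2*m. outer (pair_shift y i) (pair_shift y i)) + outer ?s ?s + circ ?a ?b"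
    using outer_shift_three[of ?s ?a ?b] by (simp only: add.assoc)
  also have "\<dots> = (\<Sum>k = 1..Suc m. circ (y (2*k - 1)) (y (2*k)))"
    using Suc.IH unfolding sum_pair_shift by simp
  finally show ?case .
qed

lemma span_eq_if_triangular:
  fixes x y :: "nat \<Rightarrow> 'a::field ^ 'n"
  assumes "\<And>i. i \<in> {1..r} \<Longrightarrow> x i - y i \<in> vec.span (y ` {1..<i})"
  shows "vec.span (x ` {1..r}) = vec.span (y ` {1..r})"
proof -
  have "x i \<in> vec.span (y ` {1..r})" if "i \<in> {1..r}" for i
  proof -
    have "y ` {1..<i} \<subseteq> y ` {1..r}"
      using that by auto
    then have "x i - y i \<in> vec.span (y ` {1..r})"
      using assms[OF that] vec.span_mono by blast
    moreover have "y i \<in> vec.span (y ` {1..r})"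
      using that by (intro vec.span_base) auto
    ultimately show ?thesis
      using vec.span_add by fastforce
  qed
  moreover have "y i \<in> vec.span (x ` {1..r})" if "i \<in> {1..r}" for i
    using that
  proof (induction i rule: less_induct)
    case (less i)
    have "y ` {1..<i} \<subseteq> vec.span (x ` {1..r})"
      using less by auto
    then have "x i - y i \<in> vec.span (x ` {1..r})"
      using assms[OF less.prems] vec.span_minimal[OF _ vec.subspace_span] by blast
    moreover have "x i \<in> vec.span (x ` {1..r})"
      using less.prems by (intro vec.span_base) auto
    ultimately show ?case
      using vec.span_diff by fastforce
  qed
  ultimately show ?thesis
    by (auto simp: vec.span_eq)
qed

lemma lin_indep_fam_if_span_eq:
  assumes y: "lin_indep_fam y r" and span: "vec.span (x ` {1..r}) = vec.span (y ` {1..r})"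
  shows "lin_indep_fam x r"
proof -
  have dim: "vec.dim (x ` {1..r}) = r"
    using y vec.span_eq_dim[OF span] vec.dim_eq_card_independent card_image
    unfolding lin_indep_fam_def by fastforce
  have "card (x ` {1..r}) \<le> r"
    using card_image_le[of "{1..r}" x] by simp
  then have indep: "vec.independent (x ` {1..r})"
    using dim by (intro vec.card_le_dim_spanning[of _ "x ` {1..r}"]) (auto intro: vec.span_base)
  then have "card (x ` {1..r}) = r"
    using dim vec.dim_eq_card_independent[OF indep] by simp
  then show ?thesis
    using indep by (simp add: lin_indep_fam_def inj_on_iff_eq_card)
qed

lemma pair_shift_diff_in_span: "pair_shift y i - y i \<in> vec.span (y ` {1..<i})"
  unfolding pair_shift_def add_diff_cancel_right'
  by (rule vec.span_sum, rule vec.span_base) auto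

lemma pair_shift_eqI:
  assumes "x 1 = y 1" and "x 2 = y 2"
    and "\<forall>k. 2 \<le> k \<and> k \<le> m \<longrightarrow>
           x (2*k - 1) = (\<Sum>j = 1..2*k - 2. y j) + y (2*k - 1)
         \<and> x (2*k) = (\<Sum>j = 1..2*k - 2. y j) + y (2*k)"
    and i: "i \<in> {1..2*m}"
  shows "x i = pair_shift y i"
proof -
  define k where "k = (i + 1) div 2"
  have k: "1 \<le> k" "k \<le> m" and i_cases: "i = 2*k - 1 \<or> i = 2*k"
    using i unfolding k_def by auto
  have "2*((i - 1) div 2) = 2*k - 2"
    using i unfolding k_def by presburger
  then have shift: "pair_shift y i = (\<Sum>j = 1..2*k - 2. y j) + y i"
    by (simp add: pair_shift_def)
  show ?thesis
  proof (cases "k = 1")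
    case True
    then show ?thesis
      using i_cases assms(1,2) shift by auto
  next
    case False
    then show ?thesis
      using i_cases assms(3) k shift by auto
  qed
qed

lemma pair_shift_representation:
  assumes y: "lin_indep_fam y (2*m)"
    and x: "\<And>i. i \<in> {1..2*m} \<Longrightarrow> x i = pair_shift y i"
  shows "lin_indep_fam x (2*m)"
    and "(\<Sum>k = 1..m. circ (y (2*k - 1)) (y (2*k)))
           = (\<Sum>i = 1..2*m. outer (x i) (x i)) + outer (\<Sum>i = 1..2*m. x i) (\<Sum>i = 1..2*m. x i)"
proof -
  have "x i - y i \<in> vec.span (y ` {1..<i})" if "i \<in> {1..2*m}" for i
    using x[OF that] pair_shift_diff_in_span by simp
  then show "lin_indep_fam x (2*m)"
    using y lin_indep_fam_if_span_eq span_eq_if_triangular by blast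
  have "(\<Sum>i = 1..2*m. outer (x i) (x i)) = (\<Sum>i = 1..2*m. outer (pair_shift y i) (pair_shift y i))"
    and "(\<Sum>i = 1..2*m. x i) = (\<Sum>i = 1..2*m. pair_shift y i)"
    by (auto simp: x intro: sum.cong)
  then show "(\<Sum>k = 1..m. circ (y (2*k - 1)) (y (2*k)))
           = (\<Sum>i = 1..2*m. outer (x i) (x i)) + outer (\<Sum>i = 1..2*m. x i) (\<Sum>i = 1..2*m. x i)"
    by (simp only: outer_sum_pair_shift)
qed

lemma alternate_eq_outer_sum:
  fixes A :: "bit ^ 'n ^ 'n"
  assumes "alternate A" and "rank A = r"
  shows "\<exists>x. lin_indep_fam x r \<and>
           A = (\<Sum>i = 1..r. outer (x i) (x i)) + outer (\<Sum>i = 1..r. x i) (\<Sum>i = 1..r. x i)"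
proof -
  obtain m y where y: "lin_indep_fam y (2*m)"
    and A: "A = (\<Sum>k = 1..m. circ (y (2*k - 1)) (y (2*k)))"
    and y_rows: "y ` {1..2*m} \<subseteq> vec.span (rows A)"
    using alternate_eq_circ_sum[OF assms(1)] by blast
  have "rows A \<subseteq> vec.span (y ` {1..2*m})"
    unfolding A by (rule rows_circ_sum_subset_span)
  then have "vec.span (rows A) = vec.span (y ` {1..2*m})"
    using y_rows by (simp add: vec.span_eq)
  from rank_eq_if_span_rows_eq[OF y this] have "r = 2*m"
    using assms(2) by simp
  then show ?thesis
    using pair_shift_representation[OF y, of "pair_shift y"] A by (intro exI[of _ "pair_shift y"]) simp
qed

lemma outer_sum_eq_if_pair_shifted:
  fixes x y :: "nat \<Rightarrow> bit ^ 'n"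
  assumes "even r" and y: "lin_indep_fam y r"
    and A: "A = (\<Sum>k = 1..r div 2. circ (y (2*k - 1)) (y (2*k)))"
    and x: "x 1 = y 1" "x 2 = y 2"
      "\<forall>k. 2 \<le> k \<and> k \<le> r div 2 \<longrightarrow>
         x (2*k - 1) = (\<Sum>j = 1..2*k - 2. y j) + y (2*k - 1)
       \<and> x (2*k) = (\<Sum>j = 1..2*k - 2. y j) + y (2*k)"
  shows "lin_indep_fam x r \<and>
           A = (\<Sum>i = 1..r. outer (x i) (x i)) + outer (\<Sum>i = 1..r. x i) (\<Sum>i = 1..r. x i)"
proof -
  obtain m where r: "r = 2*m"
    using \<open>even r\<close> by (elim evenE)
  have "x i = pair_shift y i" if "i \<in> {1..2*m}" for i
    using pair_shift_eqI[of x y m i] x r that by simp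
  then show ?thesis
    using pair_shift_representation[of y m x] y A r by simp
qed

theorem lemma3p7:
  fixes A :: "bit ^ 'n ^ 'n" and r :: nat
  assumes "alternate A" and "rank A = r" and "r > 0"
  shows "(\<exists>x :: nat \<Rightarrow> bit ^ 'n. lin_indep_fam x r \<and>
            A = (\<Sum>i = 1..r. outer (x i) (x i))
                + outer (\<Sum>i = 1..r. x i) (\<Sum>i = 1..r. x i))
       \<and> (\<forall>(y :: nat \<Rightarrow> bit ^ 'n) (x :: nat \<Rightarrow> bit ^ 'n).
            even r \<and> lin_indep_fam y r
            \<and> A = (\<Sum>k = 1..r div 2. circ (y (2*k - 1)) (y (2*k)))
            \<and> x 1 = y 1 \<and> x 2 = y 2
            \<and> (\<forall>k. 2 \<le> k \<and> k \<le> r div 2 \<longrightarrow>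
                   x (2*k - 1) = (\<Sum>j = 1..2*k - 2. y j) + y (2*k - 1)
                 \<and> x (2*k) = (\<Sum>j = 1..2*k - 2. y j) + y (2*k))
            \<longrightarrow> lin_indep_fam x r \<and>
                A = (\<Sum>i = 1..r. outer (x i) (x i))
                    + outer (\<Sum>i = 1..r. x i) (\<Sum>i = 1..r. x i))"
proof (rule conjI)
  show "\<exists>x. lin_indep_fam x r \<and>
      A = (\<Sum>i = 1..r. outer (x i) (x i)) + outer (\<Sum>i = 1..r. x i) (\<Sum>i = 1..r. x i)"
    using assms(1,2) by (rule alternate_eq_outer_sum)
qed (intro allI impI, elim conjE, rule outer_sum_eq_if_pair_shifted)

end
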